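(* Let $m$ be a positive integer, $I=\{m\}$, and $\rho_m=\frac{m}{e}\,(me)^{1/m}$. Then every complex root of $d(I;z)$ lies in the union of the discs $\mathcal D_k=\{z\in\mathbb C\mid |z-k|\le\rho_m\}$ for $k=0,1,\dots,m-1$.
   Context: $d(I;z)$ is the descent polynomial: the unique polynomial whose value at each integer $n>\max(I\cup\{0\})$ is the number of permutations $\pi\in\mathfrak S_n$ with $\{j\mid\pi_j>\pi_{j+1}\}=I$, evaluated at complex $z$. For $I=\{m\}$, $d(I;z)=\binom{z}{m}-1$. *)

theory Defs
  imports "HOL-Analysis.Analysis" "HOL-Combinatorics.Permutations"
    "HOL-Computational_Algebra.Polynomial"
begin

definition descent_set :: "nat \<Rightarrow> (nat \<Rightarrow> nat) \<Rightarrow> nat set" where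
  "descent_set n p = {j \<in> {1..<n}. p j > p (Suc j)}"

definition descent_count :: "nat set \<Rightarrow> nat \<Rightarrow> nat" where
  "descent_count I n = card {p. p permutes {1..n} \<and> descent_set n p = I}"

definition descent_poly :: "nat set \<Rightarrow> complex poly" where
  "descent_poly I = (THE q. \<forall>n::nat. n > Max (insert 0 I) \<longrightarrow>
       poly q (of_nat n) = of_nat (descent_count I n))"

definition rho :: "nat \<Rightarrow> real" where
  "rho m = real m / exp 1 * (real m * exp 1) powr (1 / real m)"

end

theory Submission
  imports Defs
begin

text \<open>
  A permutation of \<open>{1..n}\<close> with no descent outside position \<open>m\<close> is increasing on
  \<open>{1..m}\<close> and on \<open>{m+1..n}\<close>, so it is determined by the set of its first \<open>m\<close> values,
  and every \<open>m\<close>-subset arises. Only the identity has no descent at all, hence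
  \<open>d({m}; n) = C(n, m) - 1\<close> and \<open>d({m}; z) = C(z, m) - 1\<close>. At a root \<open>z\<close> we therefore
  have \<open>\<Prod>k<m. |z - k| = m!\<close>, while \<open>m! \<le> m^(m+1) / e^(m-1) = \<rho>\<^sub>m^m\<close>; so some
  factor \<open>|z - k|\<close> is at most \<open>\<rho>\<^sub>m\<close>.
\<close>

lemma map_eq_sorted_list_of_set_image:
  fixes p :: "nat \<Rightarrow> 'a::linorder"
  assumes "\<And>j. a \<le> j \<Longrightarrow> Suc j < b \<Longrightarrow> p j < p (Suc j)"
  shows "map p [a..<b] = sorted_list_of_set (p ` {a..<b})"
proof (rule strict_sorted_equal)
  show "sorted_wrt (<) (map p [a..<b])"
    unfolding sorted_wrt_iff_nth_Suc_transp[OF transp_on_less] using assms by simp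
qed simp_all

lemma sorted_append_nth_less_nth_Suc:
  fixes xs ys :: "'a::linorder list"
  assumes "sorted_wrt (<) xs" "sorted_wrt (<) ys" "Suc i < length (xs @ ys)" "Suc i \<noteq> length xs"
  shows "(xs @ ys) ! i < (xs @ ys) ! Suc i"
proof (cases "Suc i < length xs")
  case True
  then show ?thesis
    using sorted_wrt_nth_less[OF assms(1)] by (simp add: nth_append)
next
  case False
  then have "length xs \<le> i"
    using assms(4) by simp
  then show ?thesis
    using assms(3) sorted_wrt_nth_less[OF assms(2), of "i - length xs" "Suc i - length xs"]
    by (simp add: nth_append Suc_diff_le)
qed

lemma permutes_less_Suc_if_not_descent:
  assumes "p permutes {1..n}" "descent_set n p \<subseteq> D" "1 \<le> j" "j < n" "j \<notin> D"
  shows "p j < p (Suc j)"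
proof -
  have "p j \<noteq> p (Suc j)"
    using permutes_inj[OF assms(1)] by (metis inj_eq n_not_Suc_n)
  moreover have "\<not> p (Suc j) < p j"
    using assms(2-5) unfolding descent_set_def by auto
  ultimately show ?thesis
    by simp
qed

lemma permutes_eqI_map:
  assumes "p permutes {1..n}" "q permutes {1..n}" "map p [1..<Suc n] = map q [1..<Suc n]"
  shows "p = q"
proof
  fix x
  show "p x = q x"
  proof (cases "x \<in> {1..n}")
    case True
    then show ?thesis
      using assms(3) by (auto simp: map_eq_conv simp del: upt_Suc)
  next
    case False
    then show ?thesis
      using permutes_not_in[OF assms(1)] permutes_not_in[OF assms(2)] by simp
  qed
qed

definition shuffle_word :: "nat \<Rightarrow> nat set \<Rightarrow> nat list" where
  "shuffle_word n S = sorted_list_of_set S @ sorted_list_of_set ({1..n} - S)"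

lemma map_permutes_single_descent:
  assumes p: "p permutes {1..n}" and desc: "descent_set n p \<subseteq> {m}" and "m \<le> n"
  shows "map p [1..<Suc n] = shuffle_word n (p ` {1..m})"
proof -
  have "map p [1..<Suc m] = sorted_list_of_set (p ` {1..<Suc m})"
    by (rule map_eq_sorted_list_of_set_image)
      (use permutes_less_Suc_if_not_descent[OF p desc] \<open>m \<le> n\<close> in auto)
  moreover have "map p [Suc m..<Suc n] = sorted_list_of_set (p ` {Suc m..<Suc n})"
    by (rule map_eq_sorted_list_of_set_image)
      (use permutes_less_Suc_if_not_descent[OF p desc] in auto)
  moreover have "p ` {Suc m..<Suc n} = p ` ({1..n} - {1..m})"
    by (rule arg_cong[where f = "image p"]) auto
  moreover have "\<dots> = {1..n} - p ` {1..m}"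
    using \<open>m \<le> n\<close> permutes_image[OF p]
    by (subst inj_on_image_set_diff[OF permutes_inj_on[OF p]]) auto
  moreover have "[1..<Suc n] = [1..<Suc m] @ [Suc m..<Suc n]"
    using upt_add_eq_append[of 1 "Suc m" "n - m"] \<open>m \<le> n\<close> by (simp del: upt_Suc)
  ultimately show ?thesis
    by (simp add: shuffle_word_def atLeastLessThanSuc_atLeastAtMost del: upt_Suc)
qed

lemma descent_set_empty_iff:
  assumes "p permutes {1..n}"
  shows "descent_set n p = {} \<longleftrightarrow> p = id"
proof
  assume "descent_set n p = {}"
  then have "map p [1..<Suc n] = map id [1..<Suc n]"
    using map_permutes_single_descent[OF assms, of n] permutes_image[OF assms]
    by (simp add: shuffle_word_def atLeastLessThanSuc_atLeastAtMost[symmetric])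
  then show "p = id"
    by (rule permutes_eqI_map[OF assms permutes_id])
qed (simp add: descent_set_def)

definition shuffle_perm :: "nat \<Rightarrow> nat set \<Rightarrow> nat \<Rightarrow> nat" where
  "shuffle_perm n S j = (if j \<in> {1..n} then shuffle_word n S ! (j - 1) else j)"

lemma length_shuffle_word:
  assumes "S \<subseteq> {1..n}"
  shows "length (shuffle_word n S) = n"
  using assms card_mono[OF _ assms] finite_subset[OF assms]
  by (simp add: shuffle_word_def card_Diff_subset)

lemma map_shuffle_perm:
  assumes "S \<subseteq> {1..n}"
  shows "map (shuffle_perm n S) [1..<Suc n] = shuffle_word n S"
  by (rule nth_equalityI)
    (use length_shuffle_word[OF assms] in \<open>auto simp: shuffle_perm_def simp del: upt_Suc\<close>)

lemma shuffle_perm_permutes: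
  assumes "S \<subseteq> {1..n}"
  shows "shuffle_perm n S permutes {1..n}"
proof (rule bij_imp_permutes)
  have "bij_betw (\<lambda>j. j - 1) {1..n} {..<n}"
    by (rule bij_betw_byWitness[where f' = Suc]) auto
  moreover have "bij_betw ((!) (shuffle_word n S)) {..<n} {1..n}"
    using assms length_shuffle_word[OF assms] finite_subset[OF assms]
    by (intro bij_betw_nth) (auto simp: shuffle_word_def)
  ultimately have "bij_betw ((!) (shuffle_word n S) \<circ> (\<lambda>j. j - 1)) {1..n} {1..n}"
    by (rule bij_betw_trans)
  then show "bij_betw (shuffle_perm n S) {1..n} {1..n}"
    by (rule bij_betw_cong[THEN iffD1, rotated]) (simp add: shuffle_perm_def)
qed (auto simp: shuffle_perm_def)

lemma shuffle_perm_image: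
  assumes "S \<subseteq> {1..n}"
  shows "shuffle_perm n S ` {1..card S} = S"
proof -
  have "card S \<le> n"
    using card_mono[OF _ assms] by simp
  then have "shuffle_perm n S ` {1..card S} =
      set (take (card S) (map (shuffle_perm n S) [1..<Suc n]))"
    by (simp add: take_map atLeastLessThanSuc_atLeastAtMost[symmetric] del: upt_Suc)
  also have "\<dots> = S"
    using finite_subset[OF assms]
    by (simp only: map_shuffle_perm[OF assms]) (simp add: shuffle_word_def)
  finally show ?thesis .
qed

lemma descent_set_shuffle_perm:
  assumes "S \<subseteq> {1..n}"
  shows "descent_set n (shuffle_perm n S) \<subseteq> {card S}"
proof
  fix j
  assume j: "j \<in> descent_set n (shuffle_perm n S)"
  show "j \<in> {card S}"
  proof (rule ccontr)
    assume "j \<notin> {card S}"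
    with j have "shuffle_word n S ! (j - 1) < shuffle_word n S ! Suc (j - 1)"
      using length_shuffle_word[OF assms] finite_subset[OF assms] unfolding shuffle_word_def
      by (intro sorted_append_nth_less_nth_Suc) (auto simp: descent_set_def)
    with j show False
      by (auto simp: descent_set_def shuffle_perm_def)
  qed
qed

lemma bij_betw_single_descent_perms_subsets:
  assumes "m \<le> n"
  shows "bij_betw (\<lambda>p. p ` {1..m})
    {p. p permutes {1..n} \<and> descent_set n p \<subseteq> {m}} {S. S \<subseteq> {1..n} \<and> card S = m}"
proof (rule bij_betw_imageI)
  show "inj_on (\<lambda>p. p ` {1..m}) {p. p permutes {1..n} \<and> descent_set n p \<subseteq> {m}}"
  proof (rule inj_onI, clarify)
    fix p q
    assume "p permutes {1..n}" "descent_set n p \<subseteq> {m}" "q permutes {1..n}"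
      "descent_set n q \<subseteq> {m}" "p ` {1..m} = q ` {1..m}"
    then show "p = q"
      using map_permutes_single_descent[OF _ _ assms] permutes_eqI_map by metis
  qed
  show "(\<lambda>p. p ` {1..m}) ` {p. p permutes {1..n} \<and> descent_set n p \<subseteq> {m}} =
      {S. S \<subseteq> {1..n} \<and> card S = m}"
  proof (intro equalityI subsetI)
    fix S
    assume "S \<in> (\<lambda>p. p ` {1..m}) ` {p. p permutes {1..n} \<and> descent_set n p \<subseteq> {m}}"
    then obtain p where p: "p permutes {1..n}" and S: "S = p ` {1..m}"
      by blast
    have "S \<subseteq> {1..n}"
      using S assms permutes_image[OF p] by auto
    moreover have "card S = m"
      using S card_image[OF permutes_inj_on[OF p]] by simp
    ultimately show "S \<in> {S. S \<subseteq> {1..n} \<and> card S = m}"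
      by simp
  next
    fix S
    assume "S \<in> {S. S \<subseteq> {1..n} \<and> card S = m}"
    then have S: "S \<subseteq> {1..n}" "card S = m"
      by auto
    show "S \<in> (\<lambda>p. p ` {1..m}) ` {p. p permutes {1..n} \<and> descent_set n p \<subseteq> {m}}"
      by (rule image_eqI[of _ _ "shuffle_perm n S"])
        (use S shuffle_perm_image[OF S(1)] shuffle_perm_permutes[OF S(1)]
          descent_set_shuffle_perm[OF S(1)] in auto)
  qed
qed

lemma descent_count_singleton:
  assumes "m \<le> n"
  shows "descent_count {m} n = (n choose m) - 1"
proof -
  let ?P = "{p. p permutes {1..n} \<and> descent_set n p \<subseteq> {m}}"
  have "descent_set n p = {m} \<longleftrightarrow> descent_set n p \<subseteq> {m} \<and> p \<noteq> id"
    if "p permutes {1..n}" for p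
    using descent_set_empty_iff[OF that] by blast
  then have "{p. p permutes {1..n} \<and> descent_set n p = {m}} = ?P - {id}"
    by blast
  moreover have "id \<in> ?P"
    using descent_set_empty_iff[OF permutes_id] by simp
  ultimately have "descent_count {m} n = card ?P - 1"
    by (simp add: descent_count_def)
  also have "card ?P = card {S. S \<subseteq> {1..n} \<and> card S = m}"
    using bij_betw_single_descent_perms_subsets[OF assms] by (rule bij_betw_same_card)
  also have "\<dots> = n choose m"
    using n_subsets[of "{1..n}" m] by simp
  finally show ?thesis .
qed

lemma poly_eqI_infinite:
  fixes p q :: "'a::idom poly"
  assumes "infinite A" "\<And>x. x \<in> A \<Longrightarrow> poly p x = poly q x"
  shows "p = q"
proof (rule ccontr)
  assume "p \<noteq> q"
  then have "finite {x. poly (p - q) x = 0}"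
    by (intro poly_roots_finite) simp
  moreover have "A \<subseteq> {x. poly (p - q) x = 0}"
    using assms(2) by auto
  ultimately show False
    using assms(1) finite_subset by blast
qed

lemma descent_poly_eqI:
  assumes "\<And>n. n > Max (insert 0 I) \<Longrightarrow> poly q (of_nat n) = of_nat (descent_count I n)"
  shows "descent_poly I = q"
  unfolding descent_poly_def
proof (rule the_equality)
  show "\<forall>n. n > Max (insert 0 I) \<longrightarrow> poly q (of_nat n) = of_nat (descent_count I n)"
    using assms by blast
next
  fix q' :: "complex poly"
  assume q': "\<forall>n. n > Max (insert 0 I) \<longrightarrow> poly q' (of_nat n) = of_nat (descent_count I n)"
  show "q' = q"
  proof (rule poly_eqI_infinite)
    show "infinite (of_nat ` {Max (insert 0 I)<..} :: complex set)"
      using infinite_Ioi by (simp add: finite_image_iff inj_on_def)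
    show "poly q' x = poly q x" if "x \<in> of_nat ` {Max (insert 0 I)<..}" for x
      using that q' assms by auto
  qed
qed

lemma poly_descent_poly_singleton: "poly (descent_poly {m}) z = (z gchoose m) - 1"
proof -
  define b where "b = smult (1 / fact m) (\<Prod>k<m. [:- of_nat k, 1:]) - (1 :: complex poly)"
  have poly_b: "poly b w = (w gchoose m) - 1" for w
    by (simp add: b_def poly_prod gbinomial_prod_rev lessThan_atLeast0)
  have "descent_poly {m} = b"
  proof (rule descent_poly_eqI)
    fix n :: nat
    assume "n > Max (insert 0 {m})"
    then have "m \<le> n" "n choose m \<ge> 1"
      by (simp_all add: Suc_leI zero_less_binomial)
    then show "poly b (of_nat n) = of_nat (descent_count {m} n)"
      by (simp add: poly_b descent_count_singleton of_nat_diff binomial_gbinomial)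
  qed
  then show ?thesis
    by (simp add: poly_b)
qed

lemma exp_one_mult_power_le: "exp 1 * real n ^ Suc n \<le> real (Suc n) ^ Suc n"
proof -
  have "(1 - 1 / real (Suc n)) ^ Suc n \<le> exp (- 1)"
    by (rule exp_ge_one_minus_x_over_n_power_n) auto
  moreover have "1 - 1 / real (Suc n) = real n / real (Suc n)"
    by (simp add: field_simps)
  ultimately have "(real n / real (Suc n)) ^ Suc n \<le> exp (- 1)"
    by simp
  then show ?thesis
    by (simp add: power_divide exp_minus field_simps del: of_nat_Suc)
qed

lemma fact_le_power_div_exp:
  assumes "n \<ge> 1"
  shows "fact n \<le> real n ^ Suc n / exp (real n - 1)"
  using assms
proof (induction n rule: dec_induct)
  case base
  then show ?case by simp
next
  case (step n)
  have "fact (Suc n) = real (Suc n) * fact n"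
    by simp
  also have "\<dots> \<le> real (Suc n) * (real n ^ Suc n / exp (real n - 1))"
    using step.IH by (intro mult_left_mono) auto
  also have "\<dots> = real (Suc n) * (exp 1 * real n ^ Suc n) / exp (real n)"
    by (simp add: exp_diff field_simps)
  also have "\<dots> \<le> real (Suc n) * real (Suc n) ^ Suc n / exp (real n)"
    using exp_one_mult_power_le[of n] by (intro divide_right_mono mult_left_mono) auto
  also have "\<dots> = real (Suc n) ^ Suc (Suc n) / exp (real (Suc n) - 1)"
    by simp
  finally show ?case .
qed

lemma rho_power:
  assumes "m > 0"
  shows "rho m ^ m = real m ^ Suc m / exp (real m - 1)"
proof -
  have "((real m * exp 1) powr (1 / real m)) ^ m = real m * exp 1"
    using assms by (simp add: powr_realpow[symmetric] powr_powr)
  moreover have "exp (real m) = exp 1 ^ m"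
    using exp_of_nat_mult[of m "1::real"] by simp
  ultimately show ?thesis
    unfolding rho_def using assms
    by (simp add: power_mult_distrib power_divide exp_diff field_simps)
qed

lemma fact_le_rho_power:
  assumes "m > 0"
  shows "fact m \<le> rho m ^ m"
  using fact_le_power_div_exp[of m] rho_power[OF assms] assms by simp

lemma ex_le_of_prod_le_power:
  fixes f :: "'a \<Rightarrow> real"
  assumes "finite A" "A \<noteq> {}" "r \<ge> 0" "(\<Prod>k\<in>A. f k) \<le> r ^ card A"
  shows "\<exists>k\<in>A. f k \<le> r"
proof (rule ccontr)
  assume "\<not> (\<exists>k\<in>A. f k \<le> r)"
  then have gt: "r < f k" if "k \<in> A" for k
    using that by force
  obtain k where "k \<in> A"
    using assms(2) by blast
  then have "(\<Prod>k\<in>A. r) < (\<Prod>k\<in>A. f k)"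
    using assms(1,3) gt
    by (intro prod_mono_strict[of k]) (auto intro: less_imp_le order.strict_trans1)
  then show False
    using assms(4) by simp
qed

theorem theorem4p8:
  fixes m :: nat and z :: complex
  assumes "m > 0"
    and "poly (descent_poly {m}) z = 0"
  shows "\<exists>k<m. cmod (z - of_nat k) \<le> rho m"
proof -
  have "z gchoose m = 1"
    using assms(2) by (simp add: poly_descent_poly_singleton)
  then have "(\<Prod>k<m. z - of_nat k) = fact m"
    by (simp add: gbinomial_prod_rev lessThan_atLeast0)
  then have "(\<Prod>k<m. cmod (z - of_nat k)) = fact m"
    by (metis norm_fact prod_norm)
  also have "\<dots> \<le> rho m ^ card {..<m}"
    using fact_le_rho_power[OF assms(1)] by simp
  finally have "(\<Prod>k<m. cmod (z - of_nat k)) \<le> rho m ^ card {..<m}" .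
  moreover have "rho m \<ge> 0"
    by (simp add: rho_def)
  ultimately show ?thesis
    using ex_le_of_prod_le_power[of "{..<m}"] assms(1) by auto
qed

end
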